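(* Let $A\in\mathbb{R}^{n\times m}$ have distinct columns with $a_1=0$. The following are equivalent: (1) for every $c\in\mathbb{R}^m$, the signomial $f=\mathrm{Sig}(A,c)$ satisfies $f^\star=f_{\mathsf{SAGE}}$; (2) $C_{\mathrm{NNS}}(A)=C_{\mathrm{SAGE}}(A)$; (3) $\{v\in C_{\mathrm{SAGE}}(A)^\dagger: v_1=1\}\subset\mathrm{cl}\,\mathrm{conv}\,\exp\mathcal{R}(A^\top)$.
   Context: For $c\in\mathbb{R}^m$, $\mathrm{Sig}(A,c)$ denotes $x\mapsto\sum_{i=1}^m c_i\exp(a_i^\top x)$. $C_{\mathrm{NNS}}(A)=\{c:\mathrm{Sig}(A,c)(x)\ge 0\ \forall x\in\mathbb{R}^n\}$, $C_{\mathrm{AGE}}(A,k)=\{c\in C_{\mathrm{NNS}}(A): c_i\ge 0\ \forall i\ne k\}$, $C_{\mathrm{SAGE}}(A)=\sum_{k=1}^m C_{\mathrm{AGE}}(A,k)$. For $f=\mathrm{Sig}(A,c)$: $f^\star=\inf_{x}f(x)$ and $f_{\mathsf{SAGE}}=\sup\{\gamma\in\mathbb{R}: c-\gamma e_1\in C_{\mathrm{SAGE}}(A)\}$. $K^\dagger=\{y: y^\top x\ge 0\ \forall x\in K\}$ is the dual cone. $\mathcal{R}(A^\top)=\{A^\top x: x\in\mathbb{R}^n\}\subset\mathbb{R}^m$ is the range of $A^\top$, $\exp$ is applied entrywise to vectors and elementwise to sets, and $\mathrm{cl}\,\mathrm{conv}$ is the closed convex hull. *)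

theory Defs
  imports "HOL-Analysis.Analysis"
begin

text \<open>A is an n x m real matrix (type real^'m^'n); its i-th column is column i A.
  Sig(A,c)(x) = sum_i c_i exp(a_i . x).\<close>
definition Sig :: "real^'m^'n \<Rightarrow> real^'m \<Rightarrow> real^'n \<Rightarrow> real" where
  "Sig A c x = (\<Sum>i\<in>UNIV. c $ i * exp (column i A \<bullet> x))"

definition C_NNS :: "real^'m^'n \<Rightarrow> (real^'m) set" where
  "C_NNS A = {c. \<forall>x. Sig A c x \<ge> 0}"

definition C_AGE :: "real^'m^'n \<Rightarrow> 'm \<Rightarrow> (real^'m) set" where
  "C_AGE A k = {c \<in> C_NNS A. \<forall>i. i \<noteq> k \<longrightarrow> c $ i \<ge> 0}"

definition C_SAGE :: "real^'m^'n \<Rightarrow> (real^'m) set" where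
  "C_SAGE A = {c. \<exists>f :: 'm \<Rightarrow> real^'m. (\<forall>k. f k \<in> C_AGE A k) \<and> c = (\<Sum>k\<in>UNIV. f k)}"

definition f_star :: "real^'m^'n \<Rightarrow> real^'m \<Rightarrow> ereal" where
  "f_star A c = (INF x. ereal (Sig A c x))"

text \<open>SAGE bound; i1 plays the role of the index 1 (with a_1 = 0).
  The supremum of the empty set is -infinity.\<close>
definition f_SAGE :: "real^'m^'n \<Rightarrow> 'm \<Rightarrow> real^'m \<Rightarrow> ereal" where
  "f_SAGE A i1 c = (SUP \<gamma>\<in>{\<gamma>. c - \<gamma> *\<^sub>R axis i1 1 \<in> C_SAGE A}. ereal \<gamma>)"

definition dual_cone :: "('a::real_inner) set \<Rightarrow> 'a set" where
  "dual_cone K = {y. \<forall>x\<in>K. y \<bullet> x \<ge> 0}"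

definition vec_exp :: "real^'m \<Rightarrow> real^'m" where
  "vec_exp v = (\<chi> i. exp (v $ i))"

end

theory Submission
  imports Defs
begin

text \<open>Writing \<open>w(x) = exp(A\<^sup>T x)\<close>, a signomial is the linear functional \<open>c \<mapsto> c \<bullet> w(x)\<close>, so
  \<open>C_NNS(A)\<close> is the dual cone of \<open>exp \<R>(A\<^sup>T)\<close> and (2) \<open>\<Leftrightarrow>\<close> (3) is cone duality,
  normalised by the coordinate \<open>w(x)\<^sub>1 = 1\<close>. Condition (1) is (2) read through the shift
  \<open>c \<mapsto> c - \<gamma> e\<^sub>1\<close>, which lowers the signomial by \<open>\<gamma>\<close>. Both converse directions need
  \<open>C_SAGE(A)\<close> to be closed: it is a finite sum of closed cones which is pointed, since a
  vanishing AGE signomial with distinct exponents is zero.\<close>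

section \<open>Dual cones and sums of closed cones\<close>

lemma closed_dual_cone: "closed (dual_cone S)"
proof -
  have "dual_cone S = (\<Inter>x\<in>S. {y. x \<bullet> y \<ge> 0})"
    unfolding dual_cone_def by (auto simp: inner_commute)
  thus ?thesis by (auto intro!: closed_INT closed_halfspace_ge)
qed

lemma dual_cone_add: "y \<in> dual_cone S \<Longrightarrow> z \<in> dual_cone S \<Longrightarrow> y + z \<in> dual_cone S"
  unfolding dual_cone_def by (simp add: inner_add_left)

lemma dual_cone_scaleR: "y \<in> dual_cone S \<Longrightarrow> t \<ge> 0 \<Longrightarrow> t *\<^sub>R y \<in> dual_cone S"
  unfolding dual_cone_def by simp

lemma dual_cone_closure_convex_hull: "dual_cone (closure (convex hull S)) = dual_cone S"
proof
  have "S \<subseteq> closure (convex hull S)" by (rule order_trans[OF hull_subset closure_subset])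
  thus "dual_cone (closure (convex hull S)) \<subseteq> dual_cone S" unfolding dual_cone_def by auto
  show "dual_cone S \<subseteq> dual_cone (closure (convex hull S))"
  proof
    fix y assume "y \<in> dual_cone S"
    hence "S \<subseteq> {x. y \<bullet> x \<ge> 0}" unfolding dual_cone_def by auto
    hence "closure (convex hull S) \<subseteq> {x. y \<bullet> x \<ge> 0}"
      by (intro closure_minimal hull_minimal convex_halfspace_ge closed_halfspace_ge)
    thus "y \<in> dual_cone (closure (convex hull S))" unfolding dual_cone_def by auto
  qed
qed

lemma separation_closed_convex_cone:
  fixes c :: "'a::euclidean_space"
  assumes "closed K" "convex K" "cone K" "0 \<in> K" "c \<notin> K"
  shows "\<exists>a\<in>dual_cone K. a \<bullet> c < 0"
proof -
  obtain a b where ab: "a \<bullet> c < b" "\<forall>x\<in>K. b < a \<bullet> x"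
    using separating_hyperplane_closed_point[OF assms(2,1,5)] by blast
  have "b < 0" using ab(2) \<open>0 \<in> K\<close> by force
  have "a \<bullet> s \<ge> 0" if "s \<in> K" for s
  proof (rule ccontr)
    assume "\<not> a \<bullet> s \<ge> 0"
    hence "b / (a \<bullet> s) \<ge> 0" using \<open>b < 0\<close> by (simp add: divide_nonpos_neg)
    hence "b < a \<bullet> ((b / (a \<bullet> s)) *\<^sub>R s)"
      using ab(2) \<open>cone K\<close> that unfolding cone_def by blast
    thus False using \<open>\<not> a \<bullet> s \<ge> 0\<close> by simp
  qed
  thus ?thesis using ab(1) \<open>b < 0\<close> unfolding dual_cone_def by force
qed

lemma bidual_cone_slice_subset:
  fixes T :: "'a::euclidean_space set"
  assumes "closed T" "convex T" and slice: "\<forall>t\<in>T. e \<bullet> t = 1"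
  shows "{v \<in> dual_cone (dual_cone T). e \<bullet> v = 1} \<subseteq> T"
proof
  fix v assume v: "v \<in> {v \<in> dual_cone (dual_cone T). e \<bullet> v = 1}"
  show "v \<in> T"
  proof (rule ccontr)
    assume "v \<notin> T"
    then obtain a b where ab: "a \<bullet> v < b" "\<forall>t\<in>T. b < a \<bullet> t"
      using separating_hyperplane_closed_point[OF assms(2,1)] by blast
    \<comment> \<open>on the slice, the affine functional \<open>a \<bullet> t - b\<close> is the linear one \<open>(a - b e) \<bullet> t\<close>\<close>
    have "a - b *\<^sub>R e \<in> dual_cone T"
      using ab(2) slice unfolding dual_cone_def by (simp add: inner_diff_left less_imp_le)
    hence "v \<bullet> (a - b *\<^sub>R e) \<ge> 0" using v unfolding dual_cone_def by blast
    thus False using ab(1) v by (simp add: inner_diff_right inner_commute)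
  qed
qed

lemma sum_pointed_cones_norm_bound:
  fixes K :: "'i::finite \<Rightarrow> 'a::euclidean_space set"
  assumes closed: "\<And>k. closed (K k)" and cone: "\<And>k. cone (K k)"
    and pointed: "\<And>G. (\<forall>k. G $ k \<in> K k) \<Longrightarrow> (\<Sum>k\<in>UNIV. G $ k) = 0 \<Longrightarrow> G = 0"
  shows "\<exists>\<mu>>0. \<forall>G. (\<forall>k. G $ k \<in> K k) \<longrightarrow> \<mu> * norm G \<le> norm (\<Sum>k\<in>UNIV. G $ k)"
proof -
  define P where "P = {G::'a^'i. \<forall>k. G $ k \<in> K k}"
  define S where "S = (\<lambda>G::'a^'i. \<Sum>k\<in>UNIV. G $ k)"
  have P_scale: "t *\<^sub>R G \<in> P" if "G \<in> P" "t \<ge> 0" for G t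
    using that cone unfolding P_def cone_def by auto
  have S_scale: "S (t *\<^sub>R G) = t *\<^sub>R S G" for t G
    unfolding S_def by (simp add: scaleR_sum_right)
  have compact: "compact (P \<inter> sphere 0 1)"
    unfolding P_def by (intro closed_Int_compact closed_vector_box compact_sphere) (simp add: closed)
  have cont: "continuous_on (P \<inter> sphere 0 1) (\<lambda>G. norm (S G))"
    unfolding S_def by (intro continuous_intros)
  obtain \<mu> where \<mu>: "\<mu> > 0" "\<forall>G\<in>P \<inter> sphere 0 1. \<mu> \<le> norm (S G)"
  proof (cases "P \<inter> sphere 0 1 = {}")
    case True
    thus thesis using that[of 1] by simp
  next
    case False
    then obtain G0 where G0: "G0 \<in> P \<inter> sphere 0 1"
      and min: "\<forall>G\<in>P \<inter> sphere 0 1. norm (S G0) \<le> norm (S G)"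
      using continuous_attains_inf[OF compact False cont] by blast
    have "G0 \<noteq> 0" using G0 by auto
    hence "S G0 \<noteq> 0" using pointed G0 unfolding P_def S_def by blast
    thus thesis using that[of "norm (S G0)"] min by simp
  qed
  have "\<mu> * norm G \<le> norm (S G)" if "G \<in> P" for G
  proof (cases "G = 0")
    case True
    thus ?thesis by (simp add: S_def)
  next
    case False
    let ?u = "(1 / norm G) *\<^sub>R G"
    have "?u \<in> P \<inter> sphere 0 1" using P_scale[OF that] False by simp
    hence "\<mu> \<le> norm (S ?u)" using \<mu>(2) by blast
    also have "norm (S ?u) = norm (S G) / norm G"
      by (simp only: S_scale norm_scaleR) simp
    finally show ?thesis using False by (simp add: pos_le_divide_eq)
  qed
  thus ?thesis using \<mu>(1) unfolding P_def S_def by (intro exI[of _ \<mu>]) simp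
qed

lemma closed_sum_pointed_cones:
  fixes K :: "'i::finite \<Rightarrow> 'a::euclidean_space set"
  assumes closed: "\<And>k. closed (K k)" and cone: "\<And>k. cone (K k)"
    and pointed: "\<And>G. (\<forall>k. G $ k \<in> K k) \<Longrightarrow> (\<Sum>k\<in>UNIV. G $ k) = 0 \<Longrightarrow> G = 0"
  shows "closed {c. \<exists>f. (\<forall>k. f k \<in> K k) \<and> c = (\<Sum>k\<in>UNIV. f k)}" (is "closed ?C")
proof -
  define P where "P = {G::'a^'i. \<forall>k. G $ k \<in> K k}"
  define S where "S = (\<lambda>G::'a^'i. \<Sum>k\<in>UNIV. G $ k)"
  obtain \<mu> where \<mu>: "\<mu> > 0" "\<forall>G\<in>P. \<mu> * norm G \<le> norm (S G)"
    using sum_pointed_cones_norm_bound[of K, OF closed cone pointed] unfolding P_def S_def by blast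
  have C_eq: "?C = S ` P"
  proof
    show "?C \<subseteq> S ` P"
    proof
      fix c assume "c \<in> ?C"
      then obtain f where "\<forall>k. f k \<in> K k" "c = (\<Sum>k\<in>UNIV. f k)" by blast
      thus "c \<in> S ` P" unfolding P_def S_def by (intro image_eqI[of _ _ "\<chi> k. f k"]) simp_all
    qed
    show "S ` P \<subseteq> ?C" unfolding P_def S_def by blast
  qed
  have "continuous_on UNIV S" unfolding S_def by (intro continuous_intros)
  have "c \<in> ?C" if c: "c \<in> closure ?C" for c
  proof -
    \<comment> \<open>near \<open>c\<close>, the set \<open>?C\<close> is the image of a compact part of \<open>P\<close>\<close>
    define Q where "Q = S ` (P \<inter> cball 0 ((norm c + 1) / \<mu>))"
    have "compact (P \<inter> cball 0 ((norm c + 1) / \<mu>))"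
      unfolding P_def by (intro closed_Int_compact closed_vector_box compact_cball) (simp add: closed)
    hence "closed Q" unfolding Q_def
      by (meson \<open>continuous_on UNIV S\<close> compact_continuous_image compact_imp_closed
          continuous_on_subset subset_UNIV)
    moreover have "c \<in> closure Q" unfolding closure_approachable
    proof (intro allI impI)
      fix e :: real assume "e > 0"
      then obtain y where y: "y \<in> ?C" "dist y c < min e 1"
        using c unfolding closure_approachable by (meson zero_less_one min_less_iff_conj)
      then obtain G where G: "G \<in> P" "y = S G" unfolding C_eq by blast
      have "norm y \<le> norm c + 1"
        using y(2) norm_triangle_ineq2[of y c] by (simp add: dist_norm)
      moreover have "\<mu> * norm G \<le> norm y" using \<mu>(2) G by blast
      ultimately have "norm G \<le> (norm c + 1) / \<mu>"
        using \<mu>(1) by (simp add: pos_le_divide_eq mult.commute)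
      hence "y \<in> Q" unfolding Q_def using G by simp
      thus "\<exists>y\<in>Q. dist y c < e" using y by force
    qed
    ultimately have "c \<in> Q" by (simp add: closure_closed)
    thus ?thesis unfolding Q_def C_eq by blast
  qed
  thus ?thesis by (meson closure_subset_eq subsetI)
qed

section \<open>Signomials as linear functionals\<close>

definition exp_map :: "real^'m^'n \<Rightarrow> real^'n \<Rightarrow> real^'m" where
  "exp_map A x = vec_exp (transpose A *v x)"

lemma exp_map_nth: "exp_map A x $ j = exp (column j A \<bullet> x)"
  unfolding exp_map_def vec_exp_def
  by (simp add: transpose_def matrix_vector_mult_def column_def inner_vec_def mult.commute)

lemma range_exp_map: "vec_exp ` range (\<lambda>x. transpose A *v x) = range (exp_map A)"
  by (auto simp: exp_map_def)

lemma Sig_eq_inner_exp_map: "Sig A c x = c \<bullet> exp_map A x"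
  by (simp add: Sig_def inner_vec_def exp_map_nth)

lemma Sig_minus_axis:
  assumes "column i1 A = 0"
  shows "Sig A (c - \<gamma> *\<^sub>R axis i1 1) x = Sig A c x - \<gamma>"
  using assms by (simp add: Sig_eq_inner_exp_map inner_diff_left inner_axis' exp_map_nth)

lemma C_NNS_eq_dual_cone: "C_NNS A = dual_cone (range (exp_map A))"
  unfolding C_NNS_def dual_cone_def Sig_eq_inner_exp_map by auto

lemma closed_C_AGE: "closed (C_AGE A k)"
proof -
  have "C_AGE A k = C_NNS A \<inter> (\<Inter>i\<in>-{k}. {c. axis i 1 \<bullet> c \<ge> 0})"
    unfolding C_AGE_def by (auto simp: inner_axis')
  thus ?thesis
    by (auto intro!: closed_Int closed_INT closed_halfspace_ge simp: C_NNS_eq_dual_cone closed_dual_cone)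
qed

lemma C_AGE_add: "c \<in> C_AGE A k \<Longrightarrow> d \<in> C_AGE A k \<Longrightarrow> c + d \<in> C_AGE A k"
  unfolding C_AGE_def C_NNS_eq_dual_cone by (simp add: dual_cone_add)

lemma C_AGE_scaleR: "c \<in> C_AGE A k \<Longrightarrow> t \<ge> 0 \<Longrightarrow> t *\<^sub>R c \<in> C_AGE A k"
  unfolding C_AGE_def C_NNS_eq_dual_cone by (simp add: dual_cone_scaleR)

lemma scaleR_axis_mem_C_AGE:
  assumes "t \<ge> 0"
  shows "t *\<^sub>R axis i 1 \<in> C_AGE A k"
proof -
  have "axis i 1 \<bullet> exp_map A x \<ge> 0" for x by (simp add: inner_axis' exp_map_nth)
  moreover have "axis i (1::real) $ j \<ge> 0" for j by (simp add: axis_def)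
  ultimately show ?thesis
    using assms unfolding C_AGE_def C_NNS_def Sig_eq_inner_exp_map by simp
qed

lemma C_SAGE_add:
  assumes "c \<in> C_SAGE A" "d \<in> C_SAGE A"
  shows "c + d \<in> C_SAGE A"
proof -
  obtain f g where "\<forall>k. f k \<in> C_AGE A k" "c = (\<Sum>k\<in>UNIV. f k)"
    and "\<forall>k. g k \<in> C_AGE A k" "d = (\<Sum>k\<in>UNIV. g k)"
    using assms unfolding C_SAGE_def by blast
  thus ?thesis unfolding C_SAGE_def
    by (intro CollectI exI[of _ "\<lambda>k. f k + g k"]) (simp add: C_AGE_add sum.distrib)
qed

lemma C_SAGE_scaleR:
  assumes "c \<in> C_SAGE A" "t \<ge> 0"
  shows "t *\<^sub>R c \<in> C_SAGE A"
proof -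
  obtain f where "\<forall>k. f k \<in> C_AGE A k" "c = (\<Sum>k\<in>UNIV. f k)"
    using assms unfolding C_SAGE_def by blast
  thus ?thesis unfolding C_SAGE_def
    by (intro CollectI exI[of _ "\<lambda>k. t *\<^sub>R f k"]) (simp add: assms C_AGE_scaleR scaleR_sum_right)
qed

lemma convex_C_SAGE: "convex (C_SAGE A)"
  unfolding convex_def by (simp add: C_SAGE_add C_SAGE_scaleR)

lemma scaleR_axis_mem_C_SAGE: "t \<ge> 0 \<Longrightarrow> t *\<^sub>R axis i 1 \<in> C_SAGE A"
  unfolding C_SAGE_def
  using scaleR_axis_mem_C_AGE[of 0] scaleR_axis_mem_C_AGE[of t]
  by (intro CollectI exI[of _ "\<lambda>k. if k = i then t *\<^sub>R axis i 1 else 0"]) auto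

lemma zero_mem_C_SAGE: "0 \<in> C_SAGE A"
  using scaleR_axis_mem_C_SAGE[of 0] by simp

lemma C_SAGE_subset_C_NNS: "C_SAGE A \<subseteq> C_NNS A"
  unfolding C_SAGE_def C_AGE_def C_NNS_eq_dual_cone dual_cone_def
  by (auto simp: inner_sum_left intro!: sum_nonneg)

section \<open>Closedness of the SAGE cone\<close>

lemma vanishing_AGE_signomial_eq_0:
  fixes A :: "real^'m^'n"
  assumes inj: "inj (\<lambda>i. column i A)" and nonneg: "\<forall>j. j \<noteq> k \<longrightarrow> g $ j \<ge> 0"
    and vanish: "\<forall>x. Sig A g x = 0"
  shows "g = 0"
proof -
  have Sig_split: "Sig A g x = g $ k * exp (column k A \<bullet> x)
      + (\<Sum>j\<in>UNIV - {k}. g $ j * exp (column j A \<bullet> x))" for x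
    unfolding Sig_def by (simp add: sum.remove)
  have off_k: "g $ i = 0" if "i \<noteq> k" for i
  proof (rule ccontr)
    assume "g $ i \<noteq> 0"
    with nonneg that have gi: "g $ i > 0" by force
    define d where "d = column i A - column k A"
    have "d \<noteq> 0" using that inj unfolding d_def inj_def by auto
    hence dd: "d \<bullet> d > 0" by simp
    \<comment> \<open>along \<open>x = t d\<close> the \<open>i\<close>-th term outgrows the \<open>k\<close>-th one\<close>
    define t where "t = \<bar>g $ k\<bar> / (g $ i * (d \<bullet> d))"
    define x where "x = t *\<^sub>R d"
    define ek where "ek = exp (column k A \<bullet> x)"
    have "column i A \<bullet> x = column k A \<bullet> x + t * (d \<bullet> d)"
      unfolding x_def d_def by (simp add: inner_diff_left inner_diff_right algebra_simps)
    hence ei: "exp (column i A \<bullet> x) = ek * exp (t * (d \<bullet> d))"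
      unfolding ek_def by (simp add: exp_add)
    have "g $ i * exp (column i A \<bullet> x) \<le> (\<Sum>j\<in>UNIV - {k}. g $ j * exp (column j A \<bullet> x))"
      by (rule member_le_sum) (use that nonneg in auto)
    hence "ek * (g $ k + g $ i * exp (t * (d \<bullet> d))) \<le> 0"
      using vanish Sig_split[of x] ei unfolding ek_def by (simp add: algebra_simps)
    hence "g $ k + g $ i * exp (t * (d \<bullet> d)) \<le> 0"
      unfolding ek_def by (simp add: mult_le_0_iff)
    moreover have "g $ i * (1 + t * (d \<bullet> d)) \<le> g $ i * exp (t * (d \<bullet> d))"
      using gi exp_ge_add_one_self[of "t * (d \<bullet> d)"] by simp
    moreover have "g $ i * (1 + t * (d \<bullet> d)) = g $ i + \<bar>g $ k\<bar>"
      unfolding t_def using gi dd by (simp add: field_simps)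
    ultimately show False using gi by linarith
  qed
  have "g $ k = Sig A g 0" using off_k Sig_split[of 0] by simp
  hence "g $ k = 0" using vanish by simp
  with off_k show ?thesis by (metis vec_eq_iff zero_index)
qed

lemma C_AGE_sum_eq_0_imp_eq_0:
  fixes A :: "real^'m^'n"
  assumes inj: "inj (\<lambda>i. column i A)"
    and G: "\<forall>k. G $ k \<in> C_AGE A k" and sum_0: "(\<Sum>k\<in>UNIV. G $ k) = 0"
  shows "G = 0"
proof -
  have nonneg: "Sig A (G $ k) x \<ge> 0" for k x using G unfolding C_AGE_def C_NNS_def by blast
  have sum_Sig: "(\<Sum>k\<in>UNIV. Sig A (G $ k) x) = 0" for x
  proof -
    have "(\<Sum>k\<in>UNIV. Sig A (G $ k) x) = Sig A (\<Sum>k\<in>UNIV. G $ k) x"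
      by (simp add: Sig_eq_inner_exp_map inner_sum_left)
    thus ?thesis using sum_0 by (simp add: Sig_eq_inner_exp_map)
  qed
  have Sig_0: "Sig A (G $ k) x = 0" for k x
    by (rule sum_nonneg_0[where s = UNIV, OF finite]) (rule nonneg, rule sum_Sig, rule UNIV_I)
  have "G $ k = 0" for k
  proof (rule vanishing_AGE_signomial_eq_0[OF inj])
    show "\<forall>j. j \<noteq> k \<longrightarrow> G $ k $ j \<ge> 0" using G unfolding C_AGE_def by blast
    show "\<forall>x. Sig A (G $ k) x = 0" using Sig_0 by blast
  qed
  thus ?thesis by (simp add: vec_eq_iff)
qed

lemma closed_C_SAGE:
  fixes A :: "real^'m^'n"
  assumes "inj (\<lambda>i. column i A)"
  shows "closed (C_SAGE A)"
  unfolding C_SAGE_def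
proof (rule closed_sum_pointed_cones)
  show "closed (C_AGE A k)" for k by (rule closed_C_AGE)
  show "cone (C_AGE A k)" for k unfolding cone_def by (simp add: C_AGE_scaleR)
  show "G = 0" if "\<forall>k. G $ k \<in> C_AGE A k" "(\<Sum>k\<in>UNIV. G $ k) = 0" for G
    using C_AGE_sum_eq_0_imp_eq_0[OF assms that] .
qed

section \<open>The three equivalent conditions\<close>

lemma ereal_le_f_star_iff: "ereal \<gamma> \<le> f_star A c \<longleftrightarrow> (\<forall>x. \<gamma> \<le> Sig A c x)"
  unfolding f_star_def by (simp add: le_INF_iff)

lemma f_star_less_PInf: "f_star A c < \<infinity>"
proof -
  have "f_star A c \<le> ereal (Sig A c 0)" unfolding f_star_def by (rule INF_lower) simp
  thus ?thesis by (rule le_less_trans) simp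
qed

lemma SUP_ereal_le_eq:
  fixes F :: ereal
  assumes "F < \<infinity>"
  shows "(SUP \<gamma>\<in>{\<gamma>. ereal \<gamma> \<le> F}. ereal \<gamma>) = F"
proof (cases F)
  case (real r)
  show ?thesis
  proof (rule antisym)
    show "(SUP \<gamma>\<in>{\<gamma>. ereal \<gamma> \<le> F}. ereal \<gamma>) \<le> F" by (rule SUP_least) simp
    show "F \<le> (SUP \<gamma>\<in>{\<gamma>. ereal \<gamma> \<le> F}. ereal \<gamma>)" using real by (intro SUP_upper2[of r]) auto
  qed
next
  case PInf
  with assms show ?thesis by simp
next
  case MInf
  hence "{\<gamma>. ereal \<gamma> \<le> F} = {}" by auto
  thus ?thesis using MInf by (simp add: bot_ereal_def)
qed

lemma f_star_eq_f_SAGE_if_C_NNS_eq_C_SAGE: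
  fixes A :: "real^'m^'n"
  assumes a1: "column i1 A = 0" and eq: "C_NNS A = C_SAGE A"
  shows "f_star A c = f_SAGE A i1 c"
proof -
  have "{\<gamma>. c - \<gamma> *\<^sub>R axis i1 1 \<in> C_SAGE A} = {\<gamma>. ereal \<gamma> \<le> f_star A c}"
    unfolding eq[symmetric] C_NNS_def ereal_le_f_star_iff by (simp add: Sig_minus_axis[OF a1])
  thus ?thesis unfolding f_SAGE_def using SUP_ereal_le_eq[OF f_star_less_PInf] by metis
qed

lemma C_NNS_eq_C_SAGE_if_f_star_eq_f_SAGE:
  fixes A :: "real^'m^'n"
  assumes inj: "inj (\<lambda>i. column i A)" and a1: "column i1 A = 0"
    and eq: "\<forall>c. f_star A c = f_SAGE A i1 c"
  shows "C_NNS A = C_SAGE A"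
proof
  show "C_NNS A \<subseteq> C_SAGE A"
  proof
    fix c assume "c \<in> C_NNS A"
    hence "0 \<le> f_SAGE A i1 c"
      using eq ereal_le_f_star_iff[of 0 A c] unfolding C_NNS_def by (simp add: zero_ereal_def)
    have "c \<in> closure (C_SAGE A)" unfolding closure_approachable
    proof (intro allI impI)
      fix e :: real assume "e > 0"
      hence "ereal (- (e / 2)) < 0" by (simp add: zero_ereal_def)
      hence "ereal (- (e / 2)) < f_SAGE A i1 c"
        using \<open>0 \<le> f_SAGE A i1 c\<close> by (rule less_le_trans)
      then obtain \<gamma> where \<gamma>: "c - \<gamma> *\<^sub>R axis i1 1 \<in> C_SAGE A" "- (e / 2) < \<gamma>"
        unfolding f_SAGE_def less_SUP_iff by auto
      hence "(c - \<gamma> *\<^sub>R axis i1 1) + (\<gamma> + e / 2) *\<^sub>R axis i1 1 \<in> C_SAGE A"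
        by (intro C_SAGE_add scaleR_axis_mem_C_SAGE) simp_all
      moreover have "dist (c + (e / 2) *\<^sub>R axis i1 (1::real)) c < e"
        using \<open>e > 0\<close> by (simp add: dist_norm)
      ultimately show "\<exists>y\<in>C_SAGE A. dist y c < e" by (auto simp: algebra_simps)
    qed
    thus "c \<in> C_SAGE A" using closed_C_SAGE[OF inj] by (simp add: closure_closed)
  qed
qed (rule C_SAGE_subset_C_NNS)

lemma exp_hull_coordinate_eq_1:
  assumes "column i1 A = 0"
  shows "\<forall>t\<in>closure (convex hull range (exp_map A)). axis i1 1 \<bullet> t = 1"
proof -
  have "range (exp_map A) \<subseteq> {t. axis i1 1 \<bullet> t = 1}"
    using assms by (auto simp: inner_axis' exp_map_nth)
  hence "closure (convex hull range (exp_map A)) \<subseteq> {t. axis i1 1 \<bullet> t = 1}"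
    by (intro closure_minimal hull_minimal convex_hyperplane closed_hyperplane)
  thus ?thesis by blast
qed

lemma dual_slice_subset_if_C_NNS_eq_C_SAGE:
  fixes A :: "real^'m^'n"
  assumes a1: "column i1 A = 0" and eq: "C_NNS A = C_SAGE A"
  shows "{v \<in> dual_cone (C_SAGE A). v $ i1 = 1} \<subseteq> closure (convex hull range (exp_map A))"
proof -
  have "dual_cone (C_SAGE A) = dual_cone (dual_cone (closure (convex hull range (exp_map A))))"
    unfolding eq[symmetric] C_NNS_eq_dual_cone dual_cone_closure_convex_hull ..
  thus ?thesis
    using bidual_cone_slice_subset[OF closed_closure convex_closure[OF convex_convex_hull]
        exp_hull_coordinate_eq_1[OF a1]]
    by (simp add: inner_axis')
qed

lemma dual_slice_separates_C_NNS_from_C_SAGE: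
  fixes A :: "real^'m^'n"
  assumes inj: "inj (\<lambda>i. column i A)" and a1: "column i1 A = 0"
    and c: "c \<in> C_NNS A" "c \<notin> C_SAGE A"
  shows "\<exists>v\<in>dual_cone (C_SAGE A). v $ i1 = 1 \<and> c \<bullet> v < 0"
proof -
  have "cone (C_SAGE A)" unfolding cone_def by (simp add: C_SAGE_scaleR)
  then obtain a where a: "a \<in> dual_cone (C_SAGE A)" "a \<bullet> c < 0"
    using separation_closed_convex_cone[OF closed_C_SAGE[OF inj] convex_C_SAGE]
      zero_mem_C_SAGE c(2) by blast
  \<comment> \<open>tilt \<open>a\<close> towards \<open>w\<^sub>0 = exp_map A 0\<close> so that it can be normalised to \<open>v\<^sub>1 = 1\<close>\<close>
  define w0 where "w0 = exp_map A 0"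
  have w0: "w0 \<in> dual_cone (C_SAGE A)"
    using C_SAGE_subset_C_NNS unfolding C_NNS_eq_dual_cone dual_cone_def w0_def
    by (fastforce simp: inner_commute)
  have "c \<bullet> w0 \<ge> 0" using c(1) unfolding C_NNS_eq_dual_cone dual_cone_def w0_def by auto
  define \<epsilon> where "\<epsilon> = - (a \<bullet> c) / (c \<bullet> w0 + 1)"
  have "\<epsilon> > 0" unfolding \<epsilon>_def using a(2) \<open>c \<bullet> w0 \<ge> 0\<close> by (simp add: divide_neg_pos)
  define v' where "v' = a + \<epsilon> *\<^sub>R w0"
  have v': "v' \<in> dual_cone (C_SAGE A)"
    unfolding v'_def using a(1) w0 \<open>\<epsilon> > 0\<close> by (simp add: dual_cone_add dual_cone_scaleR)
  have "c \<bullet> v' = a \<bullet> c + \<epsilon> * (c \<bullet> w0)" unfolding v'_def by (simp add: inner_add_right inner_commute)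
  also have "\<dots> < a \<bullet> c + \<epsilon> * (c \<bullet> w0 + 1)" using \<open>\<epsilon> > 0\<close> by simp
  also have "\<dots> = 0" unfolding \<epsilon>_def using \<open>c \<bullet> w0 \<ge> 0\<close> by simp
  finally have "c \<bullet> v' < 0" .
  have "a $ i1 \<ge> 0"
    using a(1) scaleR_axis_mem_C_SAGE[of 1 i1 A] unfolding dual_cone_def by (force simp: inner_axis)
  moreover have "w0 $ i1 = 1" unfolding w0_def using a1 by (simp add: exp_map_nth)
  ultimately have "v' $ i1 > 0" unfolding v'_def using \<open>\<epsilon> > 0\<close> by simp
  hence "(1 / v' $ i1) *\<^sub>R v' \<in> dual_cone (C_SAGE A) \<and> ((1 / v' $ i1) *\<^sub>R v') $ i1 = 1
      \<and> c \<bullet> ((1 / v' $ i1) *\<^sub>R v') < 0"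
    using dual_cone_scaleR[OF v'] \<open>c \<bullet> v' < 0\<close> by (simp add: divide_neg_pos)
  thus ?thesis by blast
qed

lemma C_NNS_eq_C_SAGE_if_dual_slice_subset:
  fixes A :: "real^'m^'n"
  assumes inj: "inj (\<lambda>i. column i A)" and a1: "column i1 A = 0"
    and slice: "{v \<in> dual_cone (C_SAGE A). v $ i1 = 1} \<subseteq> closure (convex hull range (exp_map A))"
  shows "C_NNS A = C_SAGE A"
proof
  show "C_NNS A \<subseteq> C_SAGE A"
  proof (rule subsetI, rule ccontr)
    fix c assume c: "c \<in> C_NNS A" "c \<notin> C_SAGE A"
    then obtain v where "v \<in> closure (convex hull range (exp_map A))" "c \<bullet> v < 0"
      using dual_slice_separates_C_NNS_from_C_SAGE[OF inj a1] slice by blast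
    moreover have "c \<in> dual_cone (closure (convex hull range (exp_map A)))"
      using c(1) unfolding C_NNS_eq_dual_cone dual_cone_closure_convex_hull .
    ultimately show False unfolding dual_cone_def by force
  qed
qed (rule C_SAGE_subset_C_NNS)

theorem mainTheorem19:
  fixes A :: "real^'m^'n" and i1 :: 'm
  assumes distinct_cols: "inj (\<lambda>i. column i A)"
    and a1_zero: "column i1 A = 0"
  shows "((\<forall>c. f_star A c = f_SAGE A i1 c) \<longleftrightarrow> C_NNS A = C_SAGE A)
       \<and> (C_NNS A = C_SAGE A \<longleftrightarrow>
           {v \<in> dual_cone (C_SAGE A). v $ i1 = 1}
             \<subseteq> closure (convex hull (vec_exp ` range (\<lambda>x. transpose A *v x))))"
  unfolding range_exp_map
  using f_star_eq_f_SAGE_if_C_NNS_eq_C_SAGE[OF a1_zero]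
    C_NNS_eq_C_SAGE_if_f_star_eq_f_SAGE[OF distinct_cols a1_zero]
    dual_slice_subset_if_C_NNS_eq_C_SAGE[OF a1_zero]
    C_NNS_eq_C_SAGE_if_dual_slice_subset[OF distinct_cols a1_zero]
  by blast

end
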